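(* Let $k$ be an algebraically closed field, let $1\le s\le t$ be integers, $R=k[x,y]/(x^s,y^t)$ with its standard grading, and $\theta$ the image of $x+y$ in $R$. Let $\kappa$ be a nonzero homogeneous element of $R$ and put $d=\sigma(k[\theta]\kappa)$. If $t-1\le d<s+t-2$, then $$\sum_{i=0}^{s+t-2-d}k[\theta]\kappa x^i=\bigoplus_{i=0}^{s+t-2-d}k[\theta]\kappa x^i,$$ i.e. this sum of $k[\theta]$-submodules of $R$ is direct.
   Context: $R=\bigoplus_i R_i$ where $R_i$ is spanned by the images of monomials of degree $i$. For a nonzero homogeneous element $\kappa\in R_m$, the socle degree $\sigma(k[\theta]\kappa)$ is the integer $d$ such that the socle of the $k[\theta]$-module $k[\theta]\kappa$ is contained in $R_d$; equivalently $d=m+e$ where $e$ is the largest integer with $\theta^e\kappa\neq0$. *)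

theory Defs
  imports "HOL-Computational_Algebra.Polynomial"
begin

text \<open>Concrete model of R = k[x,y]/(x^s,y^t): an element is represented by its
 coefficient function on the monomial basis x^a y^b (a < s, b < t) of R;
 coefficients outside this range are zero.\<close>

type_synonym 'k relt = "nat \<Rightarrow> nat \<Rightarrow> 'k"

definition inR :: "nat \<Rightarrow> nat \<Rightarrow> 'k::zero relt \<Rightarrow> bool" where
  "inR s t f \<longleftrightarrow> (\<forall>a b. \<not> (a < s \<and> b < t) \<longrightarrow> f a b = 0)"

definition rzero :: "'k::zero relt" where
  "rzero = (\<lambda>a b. 0)"

definition radd :: "'k::plus relt \<Rightarrow> 'k relt \<Rightarrow> 'k relt" where
  "radd f g = (\<lambda>a b. f a b + g a b)"

definition rmul :: "nat \<Rightarrow> nat \<Rightarrow> 'k::comm_ring_1 relt \<Rightarrow> 'k relt \<Rightarrow> 'k relt" where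
  "rmul s t f g = (\<lambda>a b. if a < s \<and> b < t
      then (\<Sum>i\<le>a. \<Sum>j\<le>b. f i j * g (a - i) (b - j)) else 0)"

definition rmono :: "nat \<Rightarrow> nat \<Rightarrow> nat \<Rightarrow> nat \<Rightarrow> 'k::comm_ring_1 relt" where
  "rmono s t a b = (\<lambda>i j. if i = a \<and> j = b \<and> a < s \<and> b < t then 1 else 0)"

primrec rpow :: "nat \<Rightarrow> nat \<Rightarrow> 'k::comm_ring_1 relt \<Rightarrow> nat \<Rightarrow> 'k relt" where
  "rpow s t f 0 = rmono s t 0 0"
| "rpow s t f (Suc n) = rmul s t f (rpow s t f n)"

definition rtheta :: "nat \<Rightarrow> nat \<Rightarrow> 'k::comm_ring_1 relt" where
  "rtheta s t = radd (rmono s t 1 0) (rmono s t 0 1)"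

definition homog :: "nat \<Rightarrow> 'k::zero relt \<Rightarrow> bool" where
  "homog m f \<longleftrightarrow> (\<forall>a b. f a b \<noteq> 0 \<longrightarrow> a + b = m)"

definition socle_deg :: "nat \<Rightarrow> nat \<Rightarrow> nat \<Rightarrow> 'k::comm_ring_1 relt \<Rightarrow> nat" where
  "socle_deg s t m \<kappa> = m + (GREATEST e. rmul s t (rpow s t (rtheta s t) e) \<kappa> \<noteq> rzero)"

definition ktheta_span :: "nat \<Rightarrow> nat \<Rightarrow> 'k::comm_ring_1 relt \<Rightarrow> 'k relt set" where
  "ktheta_span s t g = {v. \<exists>(c :: nat \<Rightarrow> 'k) N.
      v = (\<lambda>a b. \<Sum>j<N. c j * rmul s t (rpow s t (rtheta s t) j) g a b)}"

definition direct_sum :: "nat \<Rightarrow> (nat \<Rightarrow> 'k::comm_ring_1 relt set) \<Rightarrow> bool" where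
  "direct_sum n M \<longleftrightarrow> (\<forall>v. (\<forall>i\<le>n. v i \<in> M i) \<and> (\<lambda>a b. \<Sum>i\<le>n. v i a b) = rzero
      \<longrightarrow> (\<forall>i\<le>n. v i = rzero))"

end

theory Submission
  imports Defs "HOL-Computational_Algebra.Formal_Power_Series"
begin

(* Let e be the largest exponent with \<theta>^e \<kappa> \<noteq> 0 and w = \<theta>^e \<kappa>, so \<theta> w = 0 and w is
   homogeneous of degree d. Annihilation by \<theta> = x + y forces the coefficients of w along
   the antidiagonal a + b = d to alternate in sign; hence the coefficient of x^(d+1-t) y^(t-1)
   is nonzero and x^i w \<noteq> 0 for all i \<le> s+t-2-d. Given a relation
   \<Sum>_i \<Sum>_j c_ij \<theta>^j \<kappa> x^i = 0, multiplying it by \<theta>^(e-j) for the least j with some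
   c_ij \<noteq> 0 leaves \<Sum>_i c_ij x^i w = 0, whose summands have the distinct degrees d + i,
   so all c_ij vanish. *)

definition rconv :: "'k::comm_ring_1 relt \<Rightarrow> 'k relt \<Rightarrow> 'k relt" where
  "rconv f g = (\<lambda>a b. \<Sum>i\<le>a. \<Sum>j\<le>b. f i j * g (a - i) (b - j))"

definition rtrunc :: "nat \<Rightarrow> nat \<Rightarrow> 'k::zero relt \<Rightarrow> 'k relt" where
  "rtrunc s t f = (\<lambda>a b. if a < s \<and> b < t then f a b else 0)"

(* rmul is the truncation of the product of bivariate power series; embedding into
   'k fps fps transfers commutativity and associativity of the untruncated product. *)
definition relt_fps :: "'k::comm_ring_1 relt \<Rightarrow> 'k fps fps" where
  "relt_fps f = Abs_fps (\<lambda>b. Abs_fps (\<lambda>a. f a b))"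

lemma relt_fps_inject: "relt_fps f = relt_fps g \<Longrightarrow> f = g"
  by (metis relt_fps_def fps_nth_Abs_fps ext)

lemma relt_fps_rconv: "relt_fps (rconv f g) = relt_fps f * relt_fps g"
proof (intro fps_ext)
  fix a b
  have "fps_nth (fps_nth (relt_fps f * relt_fps g) b) a
      = (\<Sum>j\<le>b. \<Sum>i\<le>a. f i j * g (a - i) (b - j))"
    by (simp add: relt_fps_def fps_mult_nth fps_sum_nth atLeast0AtMost)
  also have "\<dots> = fps_nth (fps_nth (relt_fps (rconv f g)) b) a"
    by (simp add: relt_fps_def rconv_def sum.swap[of _ "{..b}"])
  finally show "fps_nth (fps_nth (relt_fps (rconv f g)) b) a
      = fps_nth (fps_nth (relt_fps f * relt_fps g) b) a" ..
qed

lemma rconv_commute: "rconv f g = rconv g f"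
  by (rule relt_fps_inject) (simp add: relt_fps_rconv mult.commute)

lemma rconv_assoc: "rconv f (rconv g h) = rconv (rconv f g) h"
  by (rule relt_fps_inject) (simp add: relt_fps_rconv mult.assoc)

lemma rmul_eq_rtrunc_rconv: "rmul s t f g = rtrunc s t (rconv f g)"
  by (simp add: rmul_def rtrunc_def rconv_def fun_eq_iff)

lemma rtrunc_rconv_rtrunc: "rtrunc s t (rconv f (rtrunc s t g)) = rtrunc s t (rconv f g)"
  by (auto simp: rtrunc_def rconv_def fun_eq_iff intro!: sum.cong)

lemma rmul_commute: "rmul s t f g = rmul s t g f"
  by (simp add: rmul_eq_rtrunc_rconv rconv_commute)

lemma rmul_assoc: "rmul s t f (rmul s t g h) = rmul s t (rmul s t f g) h"
  by (metis rmul_eq_rtrunc_rconv rtrunc_rconv_rtrunc rconv_commute rconv_assoc)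

lemma rmul_left_commute: "rmul s t f (rmul s t g h) = rmul s t g (rmul s t f h)"
  by (metis rmul_assoc rmul_commute)

lemma rmul_zero_right: "rmul s t f rzero = rzero"
  by (simp add: rmul_def rzero_def fun_eq_iff)

lemma rmul_smult_right: "rmul s t f (\<lambda>a b. c * g a b) = (\<lambda>a b. c * rmul s t f g a b)"
  by (simp add: rmul_def fun_eq_iff sum_distrib_left mult.left_commute)

lemma rmul_sum_right:
  "rmul s t f (\<lambda>a b. \<Sum>j\<in>J. g j a b) = (\<lambda>a b. \<Sum>j\<in>J. rmul s t f (g j) a b)"
  by (auto simp: rmul_def fun_eq_iff sum_distrib_left sum.swap[of _ J])

lemma rmul_radd_left: "rmul s t (radd f g) h = radd (rmul s t f h) (rmul s t g h)"
  by (simp add: rmul_def radd_def fun_eq_iff distrib_right sum.distrib)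

lemma rmul_rmono:
  "rmul s t (rmono s t p q) g =
     (\<lambda>a b. if a < s \<and> b < t \<and> p \<le> a \<and> q \<le> b then g (a - p) (b - q) else 0)"
proof -
  have "(\<Sum>i\<le>a. \<Sum>j\<le>b. (if i = p \<and> j = q then 1 else 0) * g (a - i) (b - j))
      = (if p \<le> a \<and> q \<le> b then g (a - p) (b - q) else 0)" for a b
  proof -
    have "(if i = p \<and> j = q then 1 else 0) * g (a - i) (b - j)
        = (if j = q then if i = p then g (a - p) (b - q) else 0 else 0)" for i j
      by simp
    then show ?thesis
      by (cases "q \<le> b") (simp_all add: sum.delta)
  qed
  then show ?thesis
    by (auto simp: rmul_def rmono_def fun_eq_iff)
qed

lemma rmul_rtheta:
  "rmul s t (rtheta s t) w = (\<lambda>a b. if a < s \<and> b < t then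
     (if 1 \<le> a then w (a - 1) b else 0) + (if 1 \<le> b then w a (b - 1) else 0) else 0)"
  unfolding rtheta_def rmul_radd_left rmul_rmono by (auto simp: radd_def fun_eq_iff)

lemma inR_rmul: "inR s t (rmul s t f g)"
  by (simp add: inR_def rmul_def)

lemma inR_rmono: "inR s t (rmono s t p q)"
  by (simp add: inR_def rmono_def)

lemma inR_rpow: "inR s t (rpow s t f n)"
  by (cases n) (simp_all add: inR_rmul inR_rmono)

lemma rmul_one: "inR s t g \<Longrightarrow> rmul s t (rmono s t 0 0) g = g"
  by (auto simp: rmul_rmono fun_eq_iff inR_def)

lemma rpow_add: "rpow s t f (j + n) = rmul s t (rpow s t f j) (rpow s t f n)"
  by (induction j) (simp_all add: rmul_one inR_rpow rmul_assoc)

lemma rpow_rmono_1_0: "rpow s t (rmono s t 1 0) i = rmono s t i 0"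
proof (induction i)
  case (Suc i)
  then show ?case
    by (simp add: rmul_rmono) (auto simp: rmono_def fun_eq_iff)
qed simp

lemma rmul_rmono_nonzero:
  assumes "w a b \<noteq> 0" and "a + p < s" and "b + q < t"
  shows "rmul s t (rmono s t p q) w \<noteq> rzero"
proof
  assume "rmul s t (rmono s t p q) w = rzero"
  then have "rmul s t (rmono s t p q) w (a + p) (b + q) = 0"
    by (simp add: rzero_def)
  with assms show False
    by (simp add: rmul_rmono)
qed

lemma homog_rmul: "homog p f \<Longrightarrow> homog q g \<Longrightarrow> homog (p + q) (rmul s t f g)"
proof (unfold homog_def, intro allI impI)
  fix a b
  assume hf: "\<forall>a b. f a b \<noteq> 0 \<longrightarrow> a + b = p" and hg: "\<forall>a b. g a b \<noteq> 0 \<longrightarrow> a + b = q"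
    and "rmul s t f g a b \<noteq> 0"
  then have "(\<Sum>i\<le>a. \<Sum>j\<le>b. f i j * g (a - i) (b - j)) \<noteq> 0"
    by (auto simp: rmul_def split: if_splits)
  then obtain i where "i \<le> a" "(\<Sum>j\<le>b. f i j * g (a - i) (b - j)) \<noteq> 0"
    by (meson atMost_iff sum.not_neutral_contains_not_neutral)
  then obtain j where "j \<le> b" "f i j * g (a - i) (b - j) \<noteq> 0"
    by (meson atMost_iff sum.not_neutral_contains_not_neutral)
  then have "f i j \<noteq> 0" "g (a - i) (b - j) \<noteq> 0"
    by auto
  with hf hg have "i + j = p" "(a - i) + (b - j) = q"
    by blast+
  with \<open>i \<le> a\<close> \<open>j \<le> b\<close> show "a + b = p + q"
    by linarith
qed

lemma homog_rmono: "homog (p + q) (rmono s t p q)"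
  by (simp add: homog_def rmono_def)

lemma homog_rtheta: "homog 1 (rtheta s t)"
  by (auto simp: homog_def rtheta_def radd_def rmono_def)

lemma homog_rpow: "homog 1 f \<Longrightarrow> homog n (rpow s t f n)"
  by (induction n) (use homog_rmono[of 0 0] homog_rmul in fastforce)+

lemma homog_nonzero_deg_less:
  assumes "inR s t f" and "homog p f" and "f \<noteq> rzero"
  shows "p < s + t"
proof -
  obtain a b where "f a b \<noteq> 0"
    using assms(3) by (auto simp: rzero_def fun_eq_iff)
  with assms(1,2) have "a < s" "b < t" "a + b = p"
    by (auto simp: inR_def homog_def)
  then show ?thesis
    by linarith
qed

lemma rtheta_annihilated_antidiagonal:
  fixes w :: "'k::comm_ring_1 relt"
  assumes "rmul s t (rtheta s t) w = rzero" and "a + k < s" and "b + k < t"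
  shows "w (a + k) b = (-1) ^ k * w a (b + k)"
  using assms(2,3)
proof (induction k arbitrary: b)
  case (Suc k)
  have "rmul s t (rtheta s t) w (a + Suc k) (b + 1) = 0"
    using assms(1) by (simp add: rzero_def)
  with Suc.prems have "w (a + k) (b + 1) + w (a + Suc k) b = 0"
    by (simp add: rmul_rtheta)
  moreover have "w (a + k) (b + 1) = (-1) ^ k * w a (b + Suc k)"
    using Suc.IH[of "b + 1"] Suc.prems by simp
  ultimately show ?case
    by (simp add: eq_neg_iff_add_eq_0 add.commute)
qed simp

lemma rtheta_annihilated_corner:
  fixes w :: "'k::comm_ring_1 relt"
  assumes "inR s t w" and "homog d w" and "w \<noteq> rzero"
    and "rmul s t (rtheta s t) w = rzero" and "t - 1 \<le> d"
  shows "w (d + 1 - t) (t - 1) \<noteq> 0"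
proof -
  obtain a b where ab: "w a b \<noteq> 0"
    using assms(3) by (auto simp: rzero_def fun_eq_iff)
  with assms(1,2) have "a < s" "b < t" "a + b = d"
    by (auto simp: inR_def homog_def)
  define k where "k = a - (d + 1 - t)"
  have "a = (d + 1 - t) + k" "t - 1 = b + k"
    using \<open>b < t\<close> \<open>a + b = d\<close> assms(5) by (auto simp: k_def)
  with ab \<open>a < s\<close> \<open>b < t\<close> rtheta_annihilated_antidiagonal[OF assms(4), of "d + 1 - t" k b]
  show ?thesis
    by auto
qed

lemma homog_combination_eq_zero:
  fixes u :: "nat \<Rightarrow> 'k::idom relt"
  assumes "finite I" and "inj_on deg I"
    and "\<And>i. i \<in> I \<Longrightarrow> homog (deg i) (u i)" and "\<And>i. i \<in> I \<Longrightarrow> u i \<noteq> rzero"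
    and "(\<lambda>a b. \<Sum>i\<in>I. c i * u i a b) = rzero"
    and "i \<in> I"
  shows "c i = 0"
proof -
  obtain a b where ab: "u i a b \<noteq> 0"
    using assms(4)[OF assms(6)] by (auto simp: rzero_def fun_eq_iff)
  have "u i' a b = 0" if "i' \<in> I" "i' \<noteq> i" for i'
  proof (rule ccontr)
    assume "u i' a b \<noteq> 0"
    with ab assms(3)[OF that(1)] assms(3)[OF assms(6)] have "deg i' = deg i"
      unfolding homog_def by metis
    with assms(2,6) that show False
      by (meson inj_on_eq_iff)
  qed
  then have "(\<Sum>i'\<in>I. c i' * u i' a b) = c i * u i a b"
    by (simp add: sum.remove[OF assms(1,6)])
  with assms(5) ab show ?thesis
    by (simp add: rzero_def fun_eq_iff)
qed

lemma ktheta_span_nilpotent: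
  assumes "v \<in> ktheta_span s t g"
    and "\<And>j. e < j \<Longrightarrow> rmul s t (rpow s t (rtheta s t) j) g = rzero"
  shows "\<exists>c. v = (\<lambda>a b. \<Sum>j\<le>e. c j * rmul s t (rpow s t (rtheta s t) j) g a b)"
proof -
  obtain c N where v: "v = (\<lambda>a b. \<Sum>j<N. c j * rmul s t (rpow s t (rtheta s t) j) g a b)"
    using assms(1) by (auto simp: ktheta_span_def)
  let ?F = "\<lambda>j a b. c j * rmul s t (rpow s t (rtheta s t) j) g a b"
  have truncate: "(\<Sum>j<N. ?F j a b)
      = (\<Sum>j\<le>e. (if j < N then c j else 0) * rmul s t (rpow s t (rtheta s t) j) g a b)" for a b
  proof -
    have "(\<Sum>j<N. ?F j a b) = (\<Sum>j\<in>{..<N} \<inter> {..e}. ?F j a b)"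
      using assms(2) by (intro sum.mono_neutral_right) (auto simp: rzero_def not_le)
    also have "\<dots> = (\<Sum>j\<le>e. if j < N then ?F j a b else 0)"
      by (simp add: sum.inter_restrict Int_commute)
    also have "\<dots> = (\<Sum>j\<le>e. (if j < N then c j else 0) * rmul s t (rpow s t (rtheta s t) j) g a b)"
      by (intro sum.cong) auto
    finally show ?thesis .
  qed
  show ?thesis
    unfolding v by (intro exI[of _ "\<lambda>j. if j < N then c j else 0"] ext) (rule truncate)
qed

lemma direct_sum_ktheta_span:
  fixes s t :: nat and g :: "nat \<Rightarrow> 'k::idom relt"
  defines "P \<equiv> rpow s t (rtheta s t)"
  assumes nilpotent: "\<And>i j. i \<le> n \<Longrightarrow> e < j \<Longrightarrow> rmul s t (P j) (g i) = rzero"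
    and top_nonzero: "\<And>i. i \<le> n \<Longrightarrow> rmul s t (P e) (g i) \<noteq> rzero"
    and top_homog: "\<And>i. i \<le> n \<Longrightarrow> homog (deg i) (rmul s t (P e) (g i))"
    and "inj_on deg {..n}"
  shows "direct_sum n (\<lambda>i. ktheta_span s t (g i))"
proof (unfold direct_sum_def, rule allI, rule impI)
  fix v
  assume v: "(\<forall>i\<le>n. v i \<in> ktheta_span s t (g i)) \<and> (\<lambda>a b. \<Sum>i\<le>n. v i a b) = rzero"
  have "\<forall>i\<in>{..n}. \<exists>c. v i = (\<lambda>a b. \<Sum>j\<le>e. c j * rmul s t (P j) (g i) a b)"
    using v nilpotent unfolding P_def by (auto intro: ktheta_span_nilpotent)
  from bchoice[OF this] obtain c
    where c: "\<forall>i\<in>{..n}. v i = (\<lambda>a b. \<Sum>j\<le>e. c i j * rmul s t (P j) (g i) a b)"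
    by blast
  have sum_v: "(\<lambda>a b. \<Sum>i\<le>n. \<Sum>j\<le>e. c i j * rmul s t (P j) (g i) a b) = rzero"
  proof -
    have "(\<lambda>a b. \<Sum>i\<le>n. v i a b) = (\<lambda>a b. \<Sum>i\<le>n. \<Sum>j\<le>e. c i j * rmul s t (P j) (g i) a b)"
      by (intro ext sum.cong) (simp_all add: c)
    with v show ?thesis
      by simp
  qed
  have coeff_zero: "\<forall>i\<le>n. c i j = 0" if "j \<le> e" for j
    using that
  proof (induction j rule: less_induct)
    case (less j)
    have collapse: "(\<Sum>j'\<le>e. c i j' * rmul s t (P (e - j + j')) (g i) a b)
        = c i j * rmul s t (P e) (g i) a b" if "i \<le> n" for i a b
    proof -
      have "(\<Sum>j'\<le>e. c i j' * rmul s t (P (e - j + j')) (g i) a b)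
          = (\<Sum>j'\<le>e. if j' = j then c i j * rmul s t (P e) (g i) a b else 0)"
      proof (intro sum.cong refl)
        fix j'
        assume "j' \<in> {..e}"
        then show "c i j' * rmul s t (P (e - j + j')) (g i) a b
            = (if j' = j then c i j * rmul s t (P e) (g i) a b else 0)"
          using less.IH[of j'] less.prems nilpotent[OF \<open>i \<le> n\<close>, of "e - j + j'"] \<open>i \<le> n\<close>
          by (cases j' j rule: linorder_cases) (auto simp: rzero_def)
      qed
      with less.prems show ?thesis
        by simp
    qed
    have "(\<lambda>a b. \<Sum>i\<le>n. c i j * rmul s t (P e) (g i) a b)
        = (\<lambda>a b. \<Sum>i\<le>n. \<Sum>j'\<le>e. c i j' * rmul s t (P (e - j + j')) (g i) a b)"
      by (intro ext sum.cong) (simp_all add: collapse)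
    also have "\<dots> = rmul s t (P (e - j)) (\<lambda>a b. \<Sum>i\<le>n. \<Sum>j\<le>e. c i j * rmul s t (P j) (g i) a b)"
      by (simp add: rmul_sum_right rmul_smult_right rmul_assoc P_def rpow_add)
    also have "\<dots> = rzero"
      by (simp add: sum_v rmul_zero_right)
    finally show ?case
      using homog_combination_eq_zero[where I = "{..n}" and u = "\<lambda>i. rmul s t (P e) (g i)"
          and c = "\<lambda>i. c i j"] top_homog top_nonzero \<open>inj_on deg {..n}\<close>
      by auto
  qed
  show "\<forall>i\<le>n. v i = rzero"
    using c coeff_zero by (auto simp: rzero_def)
qed

lemma socle_deg_exponent:
  assumes "inR s t \<kappa>" and "\<kappa> \<noteq> rzero" and "homog m \<kappa>"
  obtains e where "socle_deg s t m \<kappa> = m + e"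
    and "rmul s t (rpow s t (rtheta s t) e) \<kappa> \<noteq> rzero"
    and "\<And>j. e < j \<Longrightarrow> rmul s t (rpow s t (rtheta s t) j) \<kappa> = rzero"
proof -
  let ?Q = "\<lambda>e. rmul s t (rpow s t (rtheta s t) e) \<kappa> \<noteq> rzero"
  have "?Q 0"
    using assms(1,2) by (simp add: rmul_one)
  moreover have "\<forall>e. ?Q e \<longrightarrow> e \<le> s + t"
  proof (intro allI impI)
    fix e
    assume "?Q e"
    with homog_nonzero_deg_less[OF inR_rmul homog_rmul[OF homog_rpow[OF homog_rtheta] assms(3)]]
    show "e \<le> s + t"
      by fastforce
  qed
  ultimately have "?Q (GREATEST e. ?Q e)" and "\<And>j. ?Q j \<Longrightarrow> j \<le> (GREATEST e. ?Q e)"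
    using GreatestI_nat[of ?Q] Greatest_le_nat[of ?Q] by blast+
  with that show thesis
    by (force simp: socle_deg_def)
qed

theorem lemma2p14:
  fixes s t m d :: nat and \<kappa> :: "'k::alg_closed_field relt"
  assumes "1 \<le> s" and "s \<le> t"
    and "inR s t \<kappa>" and "\<kappa> \<noteq> rzero" and "homog m \<kappa>"
    and "d = socle_deg s t m \<kappa>"
    and "t - 1 \<le> d" and "d < s + t - 2"
  shows "direct_sum (s + t - 2 - d)
           (\<lambda>i. ktheta_span s t (rmul s t \<kappa> (rpow s t (rmono s t 1 0) i)))"
proof -
  let ?P = "rpow s t (rtheta s t)"
  obtain e where d: "d = m + e" and top: "rmul s t (?P e) \<kappa> \<noteq> rzero"
    and nilpotent: "\<And>j. e < j \<Longrightarrow> rmul s t (?P j) \<kappa> = rzero"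
    using socle_deg_exponent assms(3-6) by metis
  define w where "w = rmul s t (?P e) \<kappa>"
  have w_homog: "homog d w"
    using homog_rmul[OF homog_rpow[OF homog_rtheta] assms(5)] d by (simp add: w_def add.commute)
  have "w (d + 1 - t) (t - 1) \<noteq> 0"
  proof (rule rtheta_annihilated_corner[where s = s])
    show "rmul s t (rtheta s t) w = rzero"
      using nilpotent[of "Suc e"] by (simp add: w_def rmul_assoc)
  qed (use w_homog top assms(7) in \<open>simp_all add: w_def inR_rmul\<close>)
  then have top_nonzero: "rmul s t (rmono s t i 0) w \<noteq> rzero" if "i \<le> s + t - 2 - d" for i
    using that assms by (intro rmul_rmono_nonzero) auto
  have shift: "rmul s t (?P j) (rmul s t \<kappa> (rpow s t (rmono s t 1 0) i))
      = rmul s t (rmono s t i 0) (rmul s t (?P j) \<kappa>)" for i j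
    by (metis rmul_commute rmul_left_commute rpow_rmono_1_0)
  show ?thesis
  proof (rule direct_sum_ktheta_span[where e = e and deg = "\<lambda>i. d + i"])
    show "rmul s t (?P j) (rmul s t \<kappa> (rpow s t (rmono s t 1 0) i)) = rzero" if "e < j" for i j
      unfolding shift using that by (simp add: nilpotent rmul_zero_right)
    show "rmul s t (?P e) (rmul s t \<kappa> (rpow s t (rmono s t 1 0) i)) \<noteq> rzero"
      if "i \<le> s + t - 2 - d" for i
      unfolding shift using top_nonzero[OF that] by (simp add: w_def)
    show "homog (d + i) (rmul s t (?P e) (rmul s t \<kappa> (rpow s t (rmono s t 1 0) i)))" for i
      unfolding shift using homog_rmul[OF homog_rmono[of i 0] w_homog]
      by (simp add: w_def add.commute)
  qed simp
qed

end
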